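(* There is no $\mathbf{v}=(v_1,v_2)\in H^5(-1,1)\times H^4(-1,1)$ with \[ \mathbf{L}_1\mathbf{v}:=\big(v_2-yv_1',\ v_1''+v_2-yv_2'\big)=\mathbf{g}_{0,1}, \] where $\mathbf{g}_{0,1}(y)=\big(\tfrac y2,\tfrac y2\big)$. Consequently, if $\mathbf{v}\in H^5(-1,1)\times H^4(-1,1)$ and $c\in\mathbb{C}$ satisfy $\mathbf{L}_1\mathbf{v}=c\,\mathbf{g}_{0,1}$, then $c=0$ and $\mathbf{v}\in\ker\mathbf{L}_1$.
   Context: $\mathbf{L}_1$ is the linearised operator of $\partial_{tt}u-\partial_{xx}u=(\partial_tu)^2$ in self-similar variables around the ODE blow-up solution $U=s+\kappa$; the paper's space $\mathcal{H}^4$ is $H^5(-1,1)\times H^4(-1,1)$. *)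

theory Defs
  imports "HOL-Analysis.Analysis"
begin

definition I1 :: "real set" where "I1 = {-1<..<1}"

definition test_fun :: "(real \<Rightarrow> real) \<Rightarrow> bool" where
  "test_fun \<phi> \<longleftrightarrow> (\<forall>k. (deriv ^^ k) \<phi> differentiable_on UNIV) \<and>
     (\<exists>a b. -1 < a \<and> b < 1 \<and> (\<forall>x. x \<notin> {a..b} \<longrightarrow> \<phi> x = 0))"

definition L2_I :: "(real \<Rightarrow> complex) \<Rightarrow> bool" where
  "L2_I g \<longleftrightarrow> g \<in> borel_measurable lborel \<and>
     set_integrable lborel I1 (\<lambda>x. (cmod (g x))^2)"

definition weak_deriv :: "(real \<Rightarrow> complex) \<Rightarrow> nat \<Rightarrow> (real \<Rightarrow> complex) \<Rightarrow> bool" where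
  "weak_deriv f j g \<longleftrightarrow> L2_I g \<and>
     (\<forall>\<phi>. test_fun \<phi> \<longrightarrow>
        (LINT x:I1|lborel. g x * complex_of_real (\<phi> x)) =
        (-1)^j * (LINT x:I1|lborel. f x * complex_of_real ((deriv ^^ j) \<phi> x)))"

definition sobolev_H :: "nat \<Rightarrow> (real \<Rightarrow> complex) \<Rightarrow> bool" where
  "sobolev_H k f \<longleftrightarrow> L2_I f \<and> (\<forall>j\<in>{1..k}. \<exists>g. weak_deriv f j g)"

end

(*
  Eliminating v2 from the two components of L1 v = c g01 gives, in the weak sense,
  (1 - y^2) v1'' = c y / 2 on (-1,1): pair the second component with a test function phi,
  the first with phi and with (y phi)', and move derivatives onto the test functions.
  So v1'' behaves like c y / (2 (1 - y^2)) near y = 1, which is not integrable there.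
  Quantitatively, a bump phi supported in [1 - 2 delta, 1 - delta] gives
  |c| delta <= C delta * (integral of |v1''| over [1 - 2 delta, 1)), and the right-hand
  integral tends to 0 with delta because v1'' is in L^2(-1,1); hence c = 0.
*)
theory Submission
  imports Defs "HOL-Computational_Algebra.Polynomial"
begin

section \<open>Smooth functions\<close>

definition smooth :: "(real \<Rightarrow> real) \<Rightarrow> bool" where
  "smooth f \<longleftrightarrow> (\<forall>k. (deriv ^^ k) f differentiable_on UNIV)"

definition times_differentiable :: "nat \<Rightarrow> (real \<Rightarrow> real) \<Rightarrow> bool" where
  "times_differentiable n f \<longleftrightarrow> (\<forall>k<n. (deriv ^^ k) f differentiable_on UNIV)"

lemma smooth_iff_times_differentiable: "smooth f \<longleftrightarrow> (\<forall>n. times_differentiable n f)"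
  unfolding smooth_def times_differentiable_def by (meson lessI)

lemma times_differentiable_0 [simp]: "times_differentiable 0 f"
  by (simp add: times_differentiable_def)

lemma times_differentiable_Suc:
  "times_differentiable (Suc n) f \<longleftrightarrow> f differentiable_on UNIV \<and> times_differentiable n (deriv f)"
proof -
  have "(\<forall>k<Suc n. P k) \<longleftrightarrow> P 0 \<and> (\<forall>k<n. P (Suc k))" for P
    using less_Suc_eq_0_disj by auto
  then show ?thesis
    unfolding times_differentiable_def by (simp add: funpow_Suc_right del: funpow.simps)
qed

lemma times_differentiable_Suc_DERIV:
  "times_differentiable (Suc n) f \<Longrightarrow> (f has_real_derivative deriv f x) (at x)"
  by (simp add: times_differentiable_Suc differentiable_on_def DERIV_deriv_iff_real_differentiable)

lemma times_differentiable_Suc_field_differentiable: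
  "times_differentiable (Suc n) f \<Longrightarrow> f field_differentiable at x"
  using field_differentiable_def times_differentiable_Suc_DERIV by blast

lemma smooth_deriv: "smooth f \<Longrightarrow> smooth (deriv f)"
  unfolding smooth_def by (metis comp_apply funpow_Suc_right)

lemma smooth_imp_DERIV: "smooth f \<Longrightarrow> (f has_real_derivative deriv f x) (at x)"
  using smooth_iff_times_differentiable times_differentiable_Suc_DERIV by blast

lemma smooth_imp_differentiable_on: "smooth f \<Longrightarrow> f differentiable_on S"
  unfolding smooth_def by (metis differentiable_on_subset funpow_0 top_greatest)

lemma smooth_imp_field_differentiable: "smooth f \<Longrightarrow> f field_differentiable at x"
  using field_differentiable_def smooth_imp_DERIV by blast

lemma smooth_imp_continuous_on: "smooth f \<Longrightarrow> continuous_on S f"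
  by (meson DERIV_isCont continuous_at_imp_continuous_on smooth_imp_DERIV)

lemma times_differentiable_add:
  "times_differentiable n f \<Longrightarrow> times_differentiable n g \<Longrightarrow> times_differentiable n (\<lambda>x. f x + g x)"
proof (induction n arbitrary: f g)
  case (Suc n)
  have "deriv (\<lambda>x. f x + g x) = (\<lambda>x. deriv f x + deriv g x)"
    using Suc.prems by (intro ext deriv_add times_differentiable_Suc_field_differentiable)
  with Suc show ?case
    by (auto simp: times_differentiable_Suc intro: differentiable_on_add)
qed simp

lemma times_differentiable_cmult:
  "times_differentiable n f \<Longrightarrow> times_differentiable n (\<lambda>x. c * f x)"
proof (induction n arbitrary: f)
  case (Suc n)
  have "deriv (\<lambda>x. c * f x) = (\<lambda>x. c * deriv f x)"
    using Suc.prems by (intro ext deriv_cmult times_differentiable_Suc_field_differentiable)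
  with Suc show ?case
    by (auto simp: times_differentiable_Suc intro: differentiable_on_mult differentiable_on_const)
qed simp

lemma times_differentiable_mult:
  "smooth f \<Longrightarrow> smooth g \<Longrightarrow> times_differentiable n (\<lambda>x. f x * g x)"
proof (induction n arbitrary: f g)
  case (Suc n)
  have "deriv (\<lambda>x. f x * g x) = (\<lambda>x. deriv f x * g x + f x * deriv g x)"
    using Suc.prems by (intro ext) (simp add: smooth_imp_field_differentiable)
  moreover have "times_differentiable n (\<lambda>x. deriv f x * g x)"
    and "times_differentiable n (\<lambda>x. f x * deriv g x)"
    using Suc by (simp_all add: smooth_deriv)
  ultimately show ?case
    using Suc.prems by (auto simp: times_differentiable_Suc
        intro: differentiable_on_mult smooth_imp_differentiable_on times_differentiable_add)
qed simp

lemma times_differentiable_compose_affine: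
  "smooth f \<Longrightarrow> times_differentiable n (\<lambda>x. f (a * x + b))"
proof (induction n arbitrary: f)
  case (Suc n)
  have D: "((\<lambda>x. f (a * x + b)) has_real_derivative deriv f (a * x + b) * a) (at x)" for x
    by (rule DERIV_chain2[OF smooth_imp_DERIV[OF Suc.prems]]) (auto intro!: derivative_eq_intros)
  then have "deriv (\<lambda>x. f (a * x + b)) = (\<lambda>x. a * deriv f (a * x + b))"
    by (intro ext DERIV_imp_deriv) (simp add: mult.commute)
  moreover have "(\<lambda>x. f (a * x + b)) differentiable_on UNIV"
    using D by (meson differentiable_at_imp_differentiable_on real_differentiable_def)
  ultimately show ?case
    using Suc.IH[OF smooth_deriv[OF Suc.prems]]
    by (simp add: times_differentiable_Suc times_differentiable_cmult)
qed simp

lemma smooth_mult: "smooth f \<Longrightarrow> smooth g \<Longrightarrow> smooth (\<lambda>x. f x * g x)"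
  by (simp add: smooth_iff_times_differentiable times_differentiable_mult)

lemma smooth_compose_affine: "smooth f \<Longrightarrow> smooth (\<lambda>x. f (a * x + b))"
  by (simp add: smooth_iff_times_differentiable times_differentiable_compose_affine)

lemma smooth_const: "smooth (\<lambda>x. c)"
proof -
  have "times_differentiable n (\<lambda>x. c)" for n c
  proof (induction n arbitrary: c)
    case (Suc n)
    have "deriv (\<lambda>x. c) = (\<lambda>x. 0)" by (intro ext) simp
    with Suc show ?case by (simp add: times_differentiable_Suc)
  qed simp
  then show ?thesis by (simp add: smooth_iff_times_differentiable)
qed

lemma smooth_ident: "smooth (\<lambda>x. x)"
proof -
  have "deriv (\<lambda>x. x) = (\<lambda>x::real. 1)" by (intro ext) simp
  then have "times_differentiable (Suc n) (\<lambda>x. x)" for n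
    using smooth_const smooth_iff_times_differentiable by (simp add: times_differentiable_Suc)
  then show ?thesis
    by (metis smooth_iff_times_differentiable times_differentiable_0 not0_implies_Suc)
qed

section \<open>A smooth bump function\<close>

definition flat_fun :: "real poly \<Rightarrow> real \<Rightarrow> real" where
  "flat_fun p x = (if 0 < x then poly p (inverse x) * exp (- inverse x) else 0)"

text \<open>\<open>(p(1/x) e\<^sup>-\<^sup>1\<^sup>/\<^sup>x)' = x\<^sup>-\<^sup>2 (p - p')(1/x) e\<^sup>-\<^sup>1\<^sup>/\<^sup>x\<close>, so all derivatives of
  \<^const>\<open>flat_fun\<close> have the same shape.\<close>

definition flat_deriv_poly :: "real poly \<Rightarrow> real poly" where
  "flat_deriv_poly p = [:0, 0, 1:] * (p - pderiv p)"

lemma poly_times_exp_neg_tendsto_0: "((\<lambda>u. poly q u * exp (- u)) \<longlongrightarrow> (0::real)) at_top"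
proof -
  have "poly q u * exp (- u) = (\<Sum>i\<le>degree q. coeff q i * (u ^ i / exp u))" for u
    by (simp add: poly_altdef sum_distrib_right exp_minus divide_inverse mult.assoc)
  moreover have "((\<lambda>u. \<Sum>i\<le>degree q. coeff q i * (u ^ i / exp u)) \<longlongrightarrow> (\<Sum>i\<le>degree q. coeff q i * 0)) at_top"
    by (intro tendsto_sum tendsto_mult tendsto_const tendsto_power_div_exp_0)
  ultimately show ?thesis by simp
qed

lemma flat_fun_has_derivative_pos:
  assumes "0 < x"
  shows "(flat_fun p has_real_derivative flat_fun (flat_deriv_poly p) x) (at x)"
proof -
  have D: "((\<lambda>x. poly p (inverse x) * exp (- inverse x)) has_real_derivative
      poly (pderiv p) (inverse x) * (- inverse (x^2)) * exp (- inverse x)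
      + poly p (inverse x) * (exp (- inverse x) * inverse (x^2))) (at x)"
    using assms
    by (auto intro!: derivative_eq_intros DERIV_chain2[where f="poly p"] poly_DERIV
        simp: power2_eq_square)
  moreover have "poly (pderiv p) (inverse x) * (- inverse (x^2)) * exp (- inverse x)
      + poly p (inverse x) * (exp (- inverse x) * inverse (x^2)) = flat_fun (flat_deriv_poly p) x"
    using assms
    by (simp add: flat_fun_def flat_deriv_poly_def algebra_simps power2_eq_square power_inverse)
  ultimately have "((\<lambda>x. poly p (inverse x) * exp (- inverse x)) has_real_derivative
      flat_fun (flat_deriv_poly p) x) (at x)"
    by simp
  then show ?thesis
    by (rule has_field_derivative_transform_within_open[where S="{0<..}"])
       (use assms in \<open>auto simp: flat_fun_def\<close>)
qed

lemma flat_fun_has_derivative_neg: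
  assumes "x < 0"
  shows "(flat_fun p has_real_derivative flat_fun (flat_deriv_poly p) x) (at x)"
proof -
  have "((\<lambda>x. 0) has_real_derivative flat_fun (flat_deriv_poly p) x) (at x)"
    using assms by (simp add: flat_fun_def)
  then show ?thesis
    by (rule has_field_derivative_transform_within_open[where S="{..<0}"])
       (use assms in \<open>auto simp: flat_fun_def\<close>)
qed

lemma flat_fun_has_derivative_0:
  "(flat_fun p has_real_derivative flat_fun (flat_deriv_poly p) 0) (at 0)"
proof -
  have "((\<lambda>y. (flat_fun p y - flat_fun p 0) / (y - 0)) \<longlongrightarrow> 0) (at 0)"
  proof (rule filterlim_split_at)
    show "((\<lambda>y. (flat_fun p y - flat_fun p 0) / (y - 0)) \<longlongrightarrow> 0) (at_left 0)"
    proof (rule Lim_transform_eventually[OF tendsto_const])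
      show "\<forall>\<^sub>F y in at_left 0. 0 = (flat_fun p y - flat_fun p 0) / (y - 0)"
        unfolding eventually_at_left_field by (intro exI[of _ "-1"]) (auto simp: flat_fun_def)
    qed
  next
    txt \<open>For \<open>y > 0\<close> the difference quotient is \<open>q(1/y) e\<^sup>-\<^sup>1\<^sup>/\<^sup>y\<close> with \<open>q(u) = u p(u)\<close>.\<close>
    have "((\<lambda>y. poly ([:0, 1:] * p) (inverse y) * exp (- inverse y)) \<longlongrightarrow> (0::real)) (at_right 0)"
      by (rule filterlim_compose[OF poly_times_exp_neg_tendsto_0 filterlim_inverse_at_top_right])
    then show "((\<lambda>y. (flat_fun p y - flat_fun p 0) / (y - 0)) \<longlongrightarrow> 0) (at_right 0)"
    proof (rule Lim_transform_eventually)
      show "\<forall>\<^sub>F y in at_right 0.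
          poly ([:0, 1:] * p) (inverse y) * exp (- inverse y) = (flat_fun p y - flat_fun p 0) / (y - 0)"
        unfolding eventually_at_right_field
        by (intro exI[of _ 1]) (auto simp: flat_fun_def field_simps)
    qed
  qed
  then show ?thesis
    unfolding has_field_derivative_iff by (simp add: flat_fun_def)
qed

lemma flat_fun_has_derivative:
  "(flat_fun p has_real_derivative flat_fun (flat_deriv_poly p) x) (at x)"
  using flat_fun_has_derivative_0 flat_fun_has_derivative_neg flat_fun_has_derivative_pos
  by (metis linorder_neqE_linordered_idom)

lemma smooth_flat_fun: "smooth (flat_fun p)"
proof -
  have "\<forall>p. (deriv ^^ k) (flat_fun p) differentiable_on UNIV" for k
  proof (induction k)
    case 0
    have "flat_fun p differentiable (at x)" for p x
      using flat_fun_has_derivative real_differentiable_def by blast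
    then show ?case by (simp add: differentiable_at_imp_differentiable_on)
  next
    case (Suc k)
    have "deriv (flat_fun p) = flat_fun (flat_deriv_poly p)" for p
      by (intro ext DERIV_imp_deriv flat_fun_has_derivative)
    with Suc show ?case by (simp add: funpow_Suc_right del: funpow.simps)
  qed
  then show ?thesis unfolding smooth_def by blast
qed

definition exp_step :: "real \<Rightarrow> real" where
  "exp_step x = (if 0 < x then exp (- inverse x) else 0)"

lemma smooth_exp_step: "smooth exp_step"
proof -
  have "exp_step = flat_fun 1" by (intro ext) (simp add: exp_step_def flat_fun_def)
  then show ?thesis using smooth_flat_fun[of 1] by simp
qed

lemma exp_step_nonneg: "0 \<le> exp_step x"
  by (simp add: exp_step_def)

lemma exp_step_le_1: "exp_step x \<le> 1"
  by (simp add: exp_step_def)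

lemma exp_step_ge: "1/4 \<le> t \<Longrightarrow> exp (-4) \<le> exp_step t"
  using le_imp_inverse_le[of "1/4" t] by (simp add: exp_step_def)

definition bump :: "real \<Rightarrow> real \<Rightarrow> real \<Rightarrow> real" where
  "bump a b x = exp_step ((x - a) / (b - a)) * exp_step ((b - x) / (b - a))"

lemma smooth_bump: "smooth (bump a b)"
proof -
  have "(\<lambda>x. exp_step ((x - a) / (b - a))) = (\<lambda>x. exp_step (inverse (b - a) * x + - a / (b - a)))"
    and "(\<lambda>x. exp_step ((b - x) / (b - a))) = (\<lambda>x. exp_step (- inverse (b - a) * x + b / (b - a)))"
    by (simp_all add: divide_inverse algebra_simps)
  then show ?thesis
    unfolding bump_def by (metis smooth_mult smooth_compose_affine smooth_exp_step)
qed

lemma bump_nonneg: "0 \<le> bump a b x"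
  by (simp add: bump_def exp_step_nonneg)

lemma bump_le_1: "bump a b x \<le> 1"
  by (simp add: bump_def mult_le_one exp_step_nonneg exp_step_le_1)

lemma bump_eq_0: "a < b \<Longrightarrow> x \<notin> {a..b} \<Longrightarrow> bump a b x = 0"
  by (auto simp: bump_def exp_step_def zero_less_divide_iff)

lemma bump_ge:
  assumes "a < b" "a + (b - a) / 4 \<le> x" "x \<le> b - (b - a) / 4"
  shows "exp (-8) \<le> bump a b x"
proof -
  have "1/4 \<le> (x - a) / (b - a)" "1/4 \<le> (b - x) / (b - a)"
    using assms by (simp_all add: field_simps)
  then have "exp (-4) * exp (-4) \<le> bump a b x"
    unfolding bump_def by (intro mult_mono exp_step_ge) (auto simp: exp_step_nonneg)
  then show ?thesis by (simp add: mult_exp_exp)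
qed

lemma test_fun_iff:
  "test_fun \<phi> \<longleftrightarrow> smooth \<phi> \<and> (\<exists>a b. -1 < a \<and> b < 1 \<and> (\<forall>x. x \<notin> {a..b} \<longrightarrow> \<phi> x = 0))"
  by (simp add: test_fun_def smooth_def)

lemma test_fun_supportE:
  assumes "test_fun \<phi>"
  obtains a b where "-1 < a" "a \<le> b" "b < 1" "\<forall>x. x \<notin> {a..b} \<longrightarrow> \<phi> x = 0"
proof -
  obtain a b where ab: "-1 < a" "b < 1" "\<forall>x. x \<notin> {a..b} \<longrightarrow> \<phi> x = 0"
    using assms unfolding test_fun_iff by blast
  show ?thesis
  proof (cases "a \<le> b")
    case True
    with ab that show ?thesis by blast
  next
    case False
    with ab have "\<forall>x. x \<notin> {0..0} \<longrightarrow> \<phi> x = 0" by auto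
    then show ?thesis using that[of 0 0] by simp
  qed
qed

lemma test_fun_bump: "-1 < a \<Longrightarrow> a < b \<Longrightarrow> b < 1 \<Longrightarrow> test_fun (bump a b)"
  unfolding test_fun_iff using smooth_bump bump_eq_0 by blast

lemma deriv_eq_0_outside:
  fixes f :: "real \<Rightarrow> real"
  assumes "\<forall>x. x \<notin> {a..b} \<longrightarrow> f x = 0" "x \<notin> {a..b}"
  shows "deriv f x = 0"
proof -
  have "((\<lambda>x. 0) has_real_derivative 0) (at x)" by simp
  then have "(f has_real_derivative 0) (at x)"
    by (rule has_field_derivative_transform_within_open[where S="- {a..b}"]) (use assms in auto)
  then show ?thesis by (rule DERIV_imp_deriv)
qed

lemma test_fun_deriv: "test_fun \<phi> \<Longrightarrow> test_fun (deriv \<phi>)"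
  unfolding test_fun_iff using smooth_deriv deriv_eq_0_outside by meson

lemma test_fun_mult:
  assumes "smooth g" "test_fun \<phi>"
  shows "test_fun (\<lambda>x. g x * \<phi> x)"
proof -
  obtain a b where "-1 < a" "b < 1" "\<forall>x. x \<notin> {a..b} \<longrightarrow> \<phi> x = 0" and "smooth \<phi>"
    using assms(2) unfolding test_fun_iff by blast
  with assms(1) show ?thesis
    unfolding test_fun_iff by (intro conjI smooth_mult exI[of _ a] exI[of _ b]) auto
qed

lemma deriv_mult_ident: "smooth \<phi> \<Longrightarrow> deriv (\<lambda>x. x * \<phi> x) = (\<lambda>x. \<phi> x + x * deriv \<phi> x)"
  by (intro ext) (simp add: smooth_imp_field_differentiable)

lemma test_fun_bounded:
  assumes "test_fun \<phi>"
  shows "\<exists>B. \<forall>x. \<bar>\<phi> x\<bar> \<le> B"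
proof -
  obtain a b where ab: "\<forall>x. x \<notin> {a..b} \<longrightarrow> \<phi> x = 0" and "smooth \<phi>"
    using assms unfolding test_fun_iff by blast
  then have "compact (\<phi> ` {a..b})"
    by (intro compact_continuous_image smooth_imp_continuous_on compact_Icc)
  then obtain B where "\<forall>y\<in>\<phi> ` {a..b}. norm y \<le> B"
    using compact_imp_bounded bounded_iff by metis
  with ab have "\<bar>\<phi> x\<bar> \<le> max B 0" for x
    by (cases "x \<in> {a..b}") force+
  then show ?thesis by blast
qed

lemma I1_sets [measurable]: "I1 \<in> sets lborel"
  by (simp add: I1_def)

lemma integrable_indicator_I1: "integrable lborel (indicator I1 :: real \<Rightarrow> real)"
  by (rule integrable_real_indicator) (auto simp: I1_def)

definition bounded_weight :: "(real \<Rightarrow> real) \<Rightarrow> bool" where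
  "bounded_weight f \<longleftrightarrow> f \<in> borel_measurable lborel \<and> (\<exists>B. \<forall>x\<in>I1. \<bar>f x\<bar> \<le> B)"

lemma bounded_weight_test_fun:
  assumes "test_fun \<phi>"
  shows "bounded_weight \<phi>"
proof -
  have "continuous_on UNIV \<phi>"
    using assms by (simp add: test_fun_iff smooth_imp_continuous_on)
  then have "\<phi> \<in> borel_measurable lborel"
    by (simp add: borel_measurable_continuous_onI)
  then show ?thesis
    using test_fun_bounded[OF assms] unfolding bounded_weight_def by blast
qed

lemma bounded_weight_ident: "bounded_weight (\<lambda>x. x)"
  unfolding bounded_weight_def by (auto simp: I1_def intro!: exI[of _ 1])

lemma bounded_weight_mult:
  assumes "bounded_weight f" "bounded_weight g"
  shows "bounded_weight (\<lambda>x. f x * g x)"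
proof -
  obtain B C where B: "\<forall>x\<in>I1. \<bar>f x\<bar> \<le> B" and C: "\<forall>x\<in>I1. \<bar>g x\<bar> \<le> C"
    using assms unfolding bounded_weight_def by blast
  have "\<bar>f x * g x\<bar> \<le> B * C" if "x \<in> I1" for x
    unfolding abs_mult using B C that by (intro mult_mono) auto
  then show ?thesis
    using assms unfolding bounded_weight_def by auto
qed

lemma bounded_weight_indicator: "bounded_weight (\<lambda>x. c * indicator {a..b} x)"
  unfolding bounded_weight_def by (intro conjI exI[of _ "\<bar>c\<bar>"]) (auto simp: indicator_def)

lemma set_integrable_bounded_weight:
  assumes "bounded_weight f"
  shows "set_integrable lborel I1 f"
proof -
  obtain B where B: "\<forall>x\<in>I1. \<bar>f x\<bar> \<le> B" and [measurable]: "f \<in> borel_measurable lborel"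
    using assms unfolding bounded_weight_def by blast
  show ?thesis
    unfolding set_integrable_def
  proof (rule Bochner_Integration.integrable_bound)
    show "integrable lborel (\<lambda>x. B * indicator I1 x)"
      using integrable_indicator_I1 by auto
    show "AE x in lborel. norm (indicator I1 x *\<^sub>R f x) \<le> norm (B * indicator I1 x)"
      using B by (intro AE_I2) (auto simp: indicator_def)
  qed measurable
qed

lemma set_integral_deriv_test_fun:
  assumes "test_fun \<phi>"
  shows "(LINT x:I1|lborel. deriv \<phi> x) = 0"
proof -
  obtain a b where "-1 < a" "a \<le> b" "b < 1" and ab: "\<forall>x. x \<notin> {a..b} \<longrightarrow> \<phi> x = 0"
    using assms by (rule test_fun_supportE)
  moreover have "smooth \<phi>"
    using assms by (simp add: test_fun_iff)
  moreover define c d where "c = (a - 1) / 2" and "d = (b + 1) / 2"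
  ultimately have cd: "c \<le> d" "-1 < c" "d < 1" "c < a" "b < d" and "smooth \<phi>"
    by auto
  have "(LINT x:I1|lborel. deriv \<phi> x) = integral\<^sup>L lborel (\<lambda>x. indicator {c..d} x *\<^sub>R deriv \<phi> x)"
    unfolding set_lebesgue_integral_def
  proof (intro Bochner_Integration.integral_cong refl)
    fix x
    show "indicator I1 x *\<^sub>R deriv \<phi> x = indicator {c..d} x *\<^sub>R deriv \<phi> x"
      using deriv_eq_0_outside[OF ab, of x] cd
      by (cases "x \<in> {a..b}") (auto simp: I1_def indicator_def)
  qed
  also have "\<dots> = \<phi> d - \<phi> c"
  proof (rule integral_FTC_atLeastAtMost[OF cd(1)])
    show "(\<phi> has_vector_derivative deriv \<phi> x) (at x within {c..d})" for x
      using smooth_imp_DERIV[OF \<open>smooth \<phi>\<close>]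
      by (metis has_real_derivative_iff_has_vector_derivative has_vector_derivative_at_within)
    show "continuous_on {c..d} (deriv \<phi>)"
      using \<open>smooth \<phi>\<close> by (intro smooth_imp_continuous_on smooth_deriv)
  qed
  also have "\<dots> = 0"
    using ab cd by auto
  finally show ?thesis .
qed

lemma set_integral_mult_ident_deriv:
  assumes "test_fun \<phi>"
  shows "(LINT x:I1|lborel. x * deriv (\<lambda>x. x * \<phi> x) x) = - (LINT x:I1|lborel. x * \<phi> x)"
proof -
  define \<psi> where "\<psi> = (\<lambda>x. x * \<phi> x)"
  define \<eta> where "\<eta> = (\<lambda>x. x * \<psi> x)"
  have \<psi>: "test_fun \<psi>"
    unfolding \<psi>_def by (intro test_fun_mult smooth_ident assms)
  then have \<eta>: "test_fun \<eta>"
    unfolding \<eta>_def by (intro test_fun_mult smooth_ident)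
  have "deriv \<eta> = (\<lambda>x. \<psi> x + x * deriv \<psi> x)"
    unfolding \<eta>_def using \<psi> by (simp add: test_fun_iff deriv_mult_ident)
  then have "(LINT x:I1|lborel. x * deriv \<psi> x) = (LINT x:I1|lborel. deriv \<eta> x - \<psi> x)"
    by simp
  also have "\<dots> = (LINT x:I1|lborel. deriv \<eta> x) - (LINT x:I1|lborel. \<psi> x)"
    by (intro set_integral_diff(2) set_integrable_bounded_weight bounded_weight_test_fun
        test_fun_deriv \<eta> \<psi>)
  also have "\<dots> = - (LINT x:I1|lborel. \<psi> x)"
    using set_integral_deriv_test_fun[OF \<eta>] by simp
  finally show ?thesis
    unfolding \<psi>_def .
qed

lemma L2_I_imp_set_integrable:
  assumes "L2_I u"
  shows "set_integrable lborel I1 u"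
proof -
  have [measurable]: "u \<in> borel_measurable lborel"
    and "integrable lborel (\<lambda>x. indicator I1 x *\<^sub>R (cmod (u x))\<^sup>2)"
    using assms unfolding L2_I_def set_integrable_def by auto
  then have "integrable lborel (\<lambda>x. indicator I1 x + indicator I1 x *\<^sub>R (cmod (u x))\<^sup>2)"
    using integrable_indicator_I1 by auto
  then show ?thesis
    unfolding set_integrable_def
  proof (rule Bochner_Integration.integrable_bound)
    have "cmod (u x) \<le> 1 + (cmod (u x))\<^sup>2" for x
      using sum_power2_ge_zero[of "cmod (u x) - 1/2" 0] by (simp add: power2_eq_square algebra_simps)
    then show "AE x in lborel. norm (indicator I1 x *\<^sub>R u x)
        \<le> norm (indicator I1 x + indicator I1 x *\<^sub>R (cmod (u x))\<^sup>2)"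
      by (intro AE_I2) (auto simp: indicator_def)
  qed measurable
qed

lemma set_integrable_weak_deriv: "weak_deriv v j d \<Longrightarrow> set_integrable lborel I1 d"
  unfolding weak_deriv_def by (blast intro: L2_I_imp_set_integrable)

lemma set_integrable_mult_bounded_weight:
  assumes u: "set_integrable lborel I1 u" and f: "bounded_weight f"
  shows "set_integrable lborel I1 (\<lambda>x. u x * complex_of_real (f x))"
proof -
  obtain B where B: "\<forall>x\<in>I1. \<bar>f x\<bar> \<le> B" and [measurable]: "f \<in> borel_measurable lborel"
    using f unfolding bounded_weight_def by blast
  have [measurable]: "(\<lambda>x. indicator I1 x *\<^sub>R u x) \<in> borel_measurable lborel"
    using u unfolding set_integrable_def by (rule borel_measurable_integrable)
  have "(\<lambda>x. (indicator I1 x *\<^sub>R u x) * complex_of_real (f x)) \<in> borel_measurable lborel"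
    by measurable
  then have meas: "set_borel_measurable lborel I1 (\<lambda>x. u x * complex_of_real (f x))"
    unfolding set_borel_measurable_def by (simp add: mult.assoc)
  have int: "set_integrable lborel I1 (\<lambda>x. B * u x)"
    using u by simp
  have bound: "norm (u x * complex_of_real (f x)) \<le> norm (B * u x)" if "x \<in> I1" for x
  proof -
    have "norm (u x * complex_of_real (f x)) = cmod (u x) * \<bar>f x\<bar>"
      by (simp add: norm_mult)
    also have "\<dots> \<le> cmod (u x) * \<bar>B\<bar>"
      using B that by (intro mult_left_mono) auto
    finally show ?thesis
      by (simp add: norm_mult mult.commute)
  qed
  show ?thesis
    by (rule set_integrable_bound[OF int meas]) (use bound in blast)
qed

definition pairing :: "(real \<Rightarrow> complex) \<Rightarrow> (real \<Rightarrow> real) \<Rightarrow> complex" where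
  "pairing u f = (LINT x:I1|lborel. u x * complex_of_real (f x))"

lemma pairing_cong_AE:
  assumes "set_integrable lborel I1 u" "set_integrable lborel I1 w" "bounded_weight f"
    and "AE x in lborel. x \<in> I1 \<longrightarrow> u x = w x"
  shows "pairing u f = pairing w f"
  unfolding pairing_def set_lebesgue_integral_def
proof (rule integral_cong_AE)
  show "(\<lambda>x. indicator I1 x *\<^sub>R (u x * complex_of_real (f x))) \<in> borel_measurable lborel"
    and "(\<lambda>x. indicator I1 x *\<^sub>R (w x * complex_of_real (f x))) \<in> borel_measurable lborel"
    using set_integrable_mult_bounded_weight[OF assms(1,3)] set_integrable_mult_bounded_weight[OF assms(2,3)]
    unfolding set_integrable_def by (simp_all add: borel_measurable_integrable)
  show "AE x in lborel. indicator I1 x *\<^sub>R (u x * complex_of_real (f x))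
      = indicator I1 x *\<^sub>R (w x * complex_of_real (f x))"
    using assms(4) by eventually_elim (auto simp: indicator_def)
qed

lemma pairing_mult_left:
  "pairing (\<lambda>x. u x * complex_of_real (h x)) f = pairing u (\<lambda>x. h x * f x)"
  unfolding pairing_def by (simp add: mult.assoc)

lemma pairing_add_left:
  assumes "set_integrable lborel I1 u" "set_integrable lborel I1 w" "bounded_weight f"
  shows "pairing (\<lambda>x. u x + w x) f = pairing u f + pairing w f"
  unfolding pairing_def
  using set_integral_add(2)[OF set_integrable_mult_bounded_weight[OF assms(1,3)]
      set_integrable_mult_bounded_weight[OF assms(2,3)]]
  by (simp add: distrib_right)

lemma pairing_diff_left:
  assumes "set_integrable lborel I1 u" "set_integrable lborel I1 w" "bounded_weight f"
  shows "pairing (\<lambda>x. u x - w x) f = pairing u f - pairing w f"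
  unfolding pairing_def
  using set_integral_diff(2)[OF set_integrable_mult_bounded_weight[OF assms(1,3)]
      set_integrable_mult_bounded_weight[OF assms(2,3)]]
  by (simp add: left_diff_distrib)

lemma pairing_add_right:
  assumes "set_integrable lborel I1 u" "bounded_weight f" "bounded_weight g"
  shows "pairing u (\<lambda>x. f x + g x) = pairing u f + pairing u g"
  unfolding pairing_def
  using set_integral_add(2)[OF set_integrable_mult_bounded_weight[OF assms(1,2)]
      set_integrable_mult_bounded_weight[OF assms(1,3)]]
  by (simp add: distrib_left)

lemma pairing_diff_right:
  assumes "set_integrable lborel I1 u" "bounded_weight f" "bounded_weight g"
  shows "pairing u (\<lambda>x. f x - g x) = pairing u f - pairing u g"
  unfolding pairing_def
  using set_integral_diff(2)[OF set_integrable_mult_bounded_weight[OF assms(1,2)]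
      set_integrable_mult_bounded_weight[OF assms(1,3)]]
  by (simp add: right_diff_distrib)

lemma pairing_weak_deriv_1:
  "weak_deriv v 1 d \<Longrightarrow> test_fun \<phi> \<Longrightarrow> pairing d \<phi> = - pairing v (deriv \<phi>)"
  unfolding weak_deriv_def pairing_def by simp

lemma pairing_weak_deriv_2:
  "weak_deriv v 2 d \<Longrightarrow> test_fun \<phi> \<Longrightarrow> pairing d \<phi> = pairing v (deriv (deriv \<phi>))"
  unfolding weak_deriv_def pairing_def by (simp add: numeral_2_eq_2)

section \<open>The equation in weak form\<close>

lemma pairing_first_equation:
  assumes d1: "set_integrable lborel I1 d1" and v2: "set_integrable lborel I1 v2"
    and g: "set_integrable lborel I1 g" and f: "bounded_weight f"
    and eq: "AE y in lborel. y \<in> I1 \<longrightarrow> v2 y - complex_of_real y * d1 y = g y"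
  shows "pairing v2 f = pairing d1 (\<lambda>y. y * f y) + pairing g f"
proof -
  have d1y: "set_integrable lborel I1 (\<lambda>y. d1 y * complex_of_real y)"
    by (rule set_integrable_mult_bounded_weight[OF d1 bounded_weight_ident])
  have "pairing v2 f = pairing (\<lambda>y. d1 y * complex_of_real y + g y) f"
    by (rule pairing_cong_AE[OF v2 set_integral_add(1)[OF d1y g] f])
       (use eq in \<open>auto elim!: eventually_mono simp: diff_eq_eq mult.commute add.commute\<close>)
  also have "\<dots> = pairing (\<lambda>y. d1 y * complex_of_real y) f + pairing g f"
    by (rule pairing_add_left[OF d1y g f])
  finally show ?thesis
    by (simp add: pairing_mult_left)
qed

lemma pairing_second_equation:
  assumes dd1: "set_integrable lborel I1 dd1" and d2: "set_integrable lborel I1 d2"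
    and v2: "set_integrable lborel I1 v2" and g: "set_integrable lborel I1 g" and f: "bounded_weight f"
    and eq: "AE y in lborel. y \<in> I1 \<longrightarrow> dd1 y + v2 y - complex_of_real y * d2 y = g y"
  shows "pairing dd1 f = pairing g f - pairing v2 f + pairing d2 (\<lambda>y. y * f y)"
proof -
  have d2y: "set_integrable lborel I1 (\<lambda>y. d2 y * complex_of_real y)"
    by (rule set_integrable_mult_bounded_weight[OF d2 bounded_weight_ident])
  have gv2: "set_integrable lborel I1 (\<lambda>y. g y - v2 y)"
    by (rule set_integral_diff(1)[OF g v2])
  have "pairing dd1 f = pairing (\<lambda>y. (g y - v2 y) + d2 y * complex_of_real y) f"
    by (rule pairing_cong_AE[OF dd1 set_integral_add(1)[OF gv2 d2y] f])
       (use eq in \<open>auto elim!: eventually_mono simp: algebra_simps\<close>)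
  also have "\<dots> = pairing g f - pairing v2 f + pairing (\<lambda>y. d2 y * complex_of_real y) f"
    by (simp only: pairing_add_left[OF gv2 d2y f] pairing_diff_left[OF g v2 f])
  finally show ?thesis
    by (simp add: pairing_mult_left)
qed

lemma pairing_weak_form:
  assumes w1: "weak_deriv v1 1 d1" and w2: "weak_deriv v1 2 dd1" and w3: "weak_deriv v2 1 d2"
    and v2: "set_integrable lborel I1 v2" and g: "set_integrable lborel I1 g"
    and eq1: "AE y in lborel. y \<in> I1 \<longrightarrow> v2 y - complex_of_real y * d1 y = g y"
    and eq2: "AE y in lborel. y \<in> I1 \<longrightarrow> dd1 y + v2 y - complex_of_real y * d2 y = g y"
    and \<phi>: "test_fun \<phi>"
  shows "pairing dd1 (\<lambda>x. (1 - x\<^sup>2) * \<phi> x) = - pairing g (deriv (\<lambda>x. x * \<phi> x))"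
proof -
  have d1: "set_integrable lborel I1 d1" and dd1: "set_integrable lborel I1 dd1"
    and d2: "set_integrable lborel I1 d2"
    using w1 w2 w3 by (blast intro: set_integrable_weak_deriv)+
  define \<psi> where "\<psi> = (\<lambda>x. x * \<phi> x)"
  define \<eta> where "\<eta> = (\<lambda>x. x * \<psi> x)"
  have \<psi>: "test_fun \<psi>" and \<eta>: "test_fun \<eta>"
    unfolding \<psi>_def \<eta>_def by (intro test_fun_mult smooth_ident \<phi>)+
  have d\<eta>: "deriv \<eta> = (\<lambda>x. \<psi> x + x * deriv \<psi> x)"
    unfolding \<eta>_def using \<psi> by (simp add: test_fun_iff deriv_mult_ident)
  have b: "bounded_weight \<phi>" "bounded_weight \<psi>" "bounded_weight (deriv \<psi>)" "bounded_weight \<eta>"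
    "bounded_weight (\<lambda>x. x * deriv \<psi> x)"
    by (intro bounded_weight_mult bounded_weight_ident bounded_weight_test_fun test_fun_deriv \<phi> \<psi> \<eta>)+
  have "pairing dd1 \<phi> = pairing g \<phi> - pairing v2 \<phi> + pairing d2 \<psi>"
    using pairing_second_equation[OF dd1 d2 v2 g b(1) eq2] by (simp add: \<psi>_def)
  also have "pairing v2 \<phi> = pairing d1 \<psi> + pairing g \<phi>"
    using pairing_first_equation[OF d1 v2 g b(1) eq1] by (simp add: \<psi>_def)
  also have "pairing d2 \<psi> = - pairing v2 (deriv \<psi>)"
    by (rule pairing_weak_deriv_1[OF w3 \<psi>])
  also have "pairing v2 (deriv \<psi>) = pairing d1 (\<lambda>x. x * deriv \<psi> x) + pairing g (deriv \<psi>)"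
    by (rule pairing_first_equation[OF d1 v2 g b(3) eq1])
  finally have "pairing dd1 \<phi>
      = - (pairing d1 \<psi> + pairing d1 (\<lambda>x. x * deriv \<psi> x)) - pairing g (deriv \<psi>)"
    by (simp add: algebra_simps)
  also have "pairing d1 \<psi> + pairing d1 (\<lambda>x. x * deriv \<psi> x) = pairing d1 (deriv \<eta>)"
    unfolding d\<eta> by (rule pairing_add_right[OF d1 b(2,5), symmetric])
  also have "pairing d1 (deriv \<eta>) = - pairing dd1 \<eta>"
    using pairing_weak_deriv_1[OF w1 test_fun_deriv[OF \<eta>]] pairing_weak_deriv_2[OF w2 \<eta>] by simp
  finally have "pairing dd1 \<phi> - pairing dd1 \<eta> = - pairing g (deriv \<psi>)"
    by simp
  moreover have "pairing dd1 \<phi> - pairing dd1 \<eta> = pairing dd1 (\<lambda>x. (1 - x\<^sup>2) * \<phi> x)"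
    unfolding pairing_diff_right[OF dd1 b(1,4), symmetric]
    by (simp add: \<eta>_def \<psi>_def power2_eq_square algebra_simps)
  ultimately show ?thesis
    by (simp add: \<psi>_def)
qed

lemma pairing_linear_rhs:
  assumes "test_fun \<phi>"
  shows "- pairing (\<lambda>y. c * complex_of_real (y / 2)) (deriv (\<lambda>x. x * \<phi> x))
    = c * complex_of_real ((LINT x:I1|lborel. x * \<phi> x) / 2)"
proof -
  have "pairing (\<lambda>y. c * complex_of_real (y / 2)) f
      = c * complex_of_real ((LINT x:I1|lborel. x * f x) / 2)" for f
  proof -
    have "pairing (\<lambda>y. c * complex_of_real (y / 2)) f
        = (LINT x:I1|lborel. c * complex_of_real (x * f x / 2))"
      unfolding pairing_def by (simp add: mult.assoc)
    also have "\<dots> = c * complex_of_real (LINT x:I1|lborel. x * f x / 2)"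
      by (simp only: set_integral_mult_right set_integral_complex_of_real)
    finally show ?thesis
      by simp
  qed
  then show ?thesis
    using set_integral_mult_ident_deriv[OF assms] by simp
qed

section \<open>Concentration at the endpoint\<close>

lemma bump_moment_lower_bound:
  assumes "0 < \<delta>" "\<delta> \<le> 1/4"
  shows "exp (-8) * \<delta> / 4 \<le> (LINT x:I1|lborel. x * bump (1 - 2*\<delta>) (1 - \<delta>) x)"
proof -
  let ?J = "{1 - 7*\<delta>/4 .. 1 - 5*\<delta>/4}"
  have "?J \<subseteq> I1"
    using assms by (auto simp: I1_def)
  then have "(LINT x:I1|lborel. (exp (-8) / 2 :: real) * indicator ?J x)
      = (LINT x|lborel. (exp (-8) / 2 :: real) * indicator ?J x)"
    unfolding set_lebesgue_integral_def
    by (intro Bochner_Integration.integral_cong) (auto simp: indicator_def)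
  also have "\<dots> = exp (-8) * \<delta> / 4"
    using assms by simp
  finally have "exp (-8) * \<delta> / 4 = (LINT x:I1|lborel. (exp (-8) / 2 :: real) * indicator ?J x)" ..
  also have "\<dots> \<le> (LINT x:I1|lborel. x * bump (1 - 2*\<delta>) (1 - \<delta>) x)"
  proof (rule set_integral_mono)
    show "set_integrable lborel I1 (\<lambda>x. (exp (-8) / 2 :: real) * indicator ?J x)"
      by (intro set_integrable_bounded_weight bounded_weight_indicator)
    have "test_fun (bump (1 - 2*\<delta>) (1 - \<delta>))"
      using assms by (intro test_fun_bump) auto
    then show "set_integrable lborel I1 (\<lambda>x. x * bump (1 - 2*\<delta>) (1 - \<delta>) x)"
      by (intro set_integrable_bounded_weight bounded_weight_mult bounded_weight_ident
          bounded_weight_test_fun)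
    fix x
    show "(exp (-8) / 2 :: real) * indicator ?J x \<le> x * bump (1 - 2*\<delta>) (1 - \<delta>) x"
    proof (cases "x \<in> ?J")
      case True
      then have "exp (-8) \<le> bump (1 - 2*\<delta>) (1 - \<delta>) x" and "1/2 \<le> x"
        using assms by (auto intro!: bump_ge)
      then have "1/2 * exp (-8) \<le> x * bump (1 - 2*\<delta>) (1 - \<delta>) x"
        by (intro mult_mono) auto
      with True show ?thesis by simp
    next
      case False
      have "0 \<le> x * bump (1 - 2*\<delta>) (1 - \<delta>) x"
        using assms bump_eq_0[of "1 - 2*\<delta>" "1 - \<delta>" x] bump_nonneg[of "1 - 2*\<delta>" "1 - \<delta>" x]
        by (cases "x \<in> {1 - 2*\<delta>..1 - \<delta>}") auto
      with False show ?thesis by simp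
    qed
  qed
  finally show ?thesis .
qed

lemma bump_weight_bound:
  assumes "0 < \<delta>" "\<delta> \<le> 1/4" "x \<in> I1"
  shows "\<bar>(1 - x\<^sup>2) * bump (1 - 2*\<delta>) (1 - \<delta>) x\<bar> \<le> 4 * \<delta> * indicator {1 - 2*\<delta>..<1} x"
proof (cases "x \<in> {1 - 2*\<delta>..1 - \<delta>}")
  case True
  then have "0 \<le> 1 - x" "1 - x \<le> 2 * \<delta>" "0 \<le> 1 + x" "1 + x \<le> 2"
    using assms by auto
  then have "(1 - x) * (1 + x) * bump (1 - 2*\<delta>) (1 - \<delta>) x \<le> (2 * \<delta>) * 2 * 1"
    by (intro mult_mono bump_le_1) (auto simp: bump_nonneg)
  moreover have "0 \<le> (1 - x) * (1 + x) * bump (1 - 2*\<delta>) (1 - \<delta>) x"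
    using \<open>0 \<le> 1 - x\<close> \<open>0 \<le> 1 + x\<close> by (simp add: bump_nonneg)
  moreover have "1 - x\<^sup>2 = (1 - x) * (1 + x)"
    by (simp add: power2_eq_square algebra_simps)
  ultimately show ?thesis
    using True assms by (simp add: indicator_def)
next
  case False
  then show ?thesis
    using assms by (simp add: bump_eq_0)
qed

lemma endpoint_mass_lower_bound:
  assumes u: "set_integrable lborel I1 u"
    and weak: "\<And>\<phi>. test_fun \<phi> \<Longrightarrow>
      pairing u (\<lambda>x. (1 - x\<^sup>2) * \<phi> x) = c * complex_of_real ((LINT x:I1|lborel. x * \<phi> x) / 2)"
    and \<delta>: "0 < \<delta>" "\<delta> \<le> 1/4"
  shows "cmod c * exp (-8) / 32 \<le> (LINT x:I1|lborel. cmod (u x) * indicator {1 - 2*\<delta>..<1} x)"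
proof -
  define \<phi> where "\<phi> = bump (1 - 2*\<delta>) (1 - \<delta>)"
  define w where "w x = (1 - x\<^sup>2) * \<phi> x" for x
  define s where "s x = 4 * \<delta> * indicator {1 - 2*\<delta>..<1} x" for x :: real
  let ?T = "LINT x:I1|lborel. cmod (u x) * indicator {1 - 2*\<delta>..<1} x"
  have \<phi>: "test_fun \<phi>"
    unfolding \<phi>_def using \<delta> by (intro test_fun_bump) auto
  have "\<bar>1 - x\<^sup>2\<bar> \<le> 1" if "x \<in> I1" for x
    using that abs_square_le_1[of x] by (auto simp: I1_def)
  then have "bounded_weight (\<lambda>x. 1 - x\<^sup>2)"
    unfolding bounded_weight_def by auto
  then have w: "bounded_weight w"
    unfolding w_def by (rule bounded_weight_mult[OF _ bounded_weight_test_fun[OF \<phi>]])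
  have s: "bounded_weight s"
    unfolding s_def bounded_weight_def by (intro conjI exI[of _ "4 * \<delta>"]) (use \<delta> in auto)
  have "cmod c * (exp (-8) * \<delta> / 4) / 2 \<le> cmod c * \<bar>LINT x:I1|lborel. x * \<phi> x\<bar> / 2"
    using bump_moment_lower_bound[OF \<delta>] unfolding \<phi>_def
    by (intro divide_right_mono mult_left_mono) auto
  also have "\<dots> = cmod (pairing u w)"
    unfolding w_def weak[OF \<phi>] by (simp add: norm_mult)
  also have "\<dots> \<le> (LINT x:I1|lborel. norm (u x * complex_of_real (w x)))"
    unfolding pairing_def by (intro set_integral_norm_bound set_integrable_mult_bounded_weight u w)
  also have "\<dots> \<le> (LINT x:I1|lborel. norm (u x * complex_of_real (s x)))"
  proof (rule set_integral_mono)
    show "set_integrable lborel I1 (\<lambda>x. norm (u x * complex_of_real (w x)))"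
      and "set_integrable lborel I1 (\<lambda>x. norm (u x * complex_of_real (s x)))"
      by (intro set_integrable_norm set_integrable_mult_bounded_weight u w s)+
    show "norm (u x * complex_of_real (w x)) \<le> norm (u x * complex_of_real (s x))" if "x \<in> I1" for x
    proof -
      have "\<bar>w x\<bar> \<le> s x"
        using bump_weight_bound[OF \<delta> that] unfolding w_def s_def \<phi>_def .
      then show ?thesis
        by (simp add: norm_mult mult_left_mono)
    qed
  qed
  also have "\<dots> = 4 * \<delta> * ?T"
  proof -
    have "norm (u x * complex_of_real (s x))
        = 4 * \<delta> * (cmod (u x) * indicator {1 - 2*\<delta>..<1} x)" for x
      unfolding s_def using \<delta> by (simp add: norm_mult)
    then show ?thesis
      by simp
  qed
  finally show ?thesis
    using \<delta> by (simp add: field_simps)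
qed

lemma tendsto_integral_indicator_left_0:
  fixes f :: "real \<Rightarrow> real"
  assumes f: "integrable lborel f" and e: "e \<longlonglongrightarrow> 0"
  shows "(\<lambda>n. LINT x|lborel. f x * indicator {b - e n..<b} x) \<longlonglongrightarrow> 0"
proof -
  define s where "s n = (\<lambda>x. f x * indicator {b - e n..<b} x)" for n
  have [measurable]: "f \<in> borel_measurable lborel"
    using f by (rule borel_measurable_integrable)
  have "(\<lambda>n. integral\<^sup>L lborel (s n)) \<longlonglongrightarrow> integral\<^sup>L lborel (\<lambda>x::real. 0::real)"
  proof (rule integral_dominated_convergence[where w="\<lambda>x. norm (f x)"])
    show "s n \<in> borel_measurable lborel" for n
      unfolding s_def by measurable
    show "AE x in lborel. (\<lambda>n. s n x) \<longlonglongrightarrow> 0"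
    proof (rule AE_I2)
      fix x
      show "(\<lambda>n. s n x) \<longlonglongrightarrow> 0"
      proof (cases "x < b")
        case True
        then have "eventually (\<lambda>n. e n < b - x) sequentially"
          using e by (intro order_tendstoD) auto
        then have "eventually (\<lambda>n. s n x = 0) sequentially"
          by eventually_elim (auto simp: s_def indicator_def)
        then show ?thesis
          by (rule tendsto_eventually)
      qed (simp add: s_def indicator_def)
    qed
  qed (use f in \<open>auto simp: s_def indicator_def\<close>)
  then show ?thesis
    by (simp add: s_def)
qed

lemma L1_eq_multiple_of_g01_imp_zero:
  assumes v2: "L2_I v2"
    and w1: "weak_deriv v1 1 d1" and w2: "weak_deriv v1 2 dd1" and w3: "weak_deriv v2 1 d2"
    and eq: "AE y in lborel. y \<in> I1 \<longrightarrow>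
      v2 y - complex_of_real y * d1 y = c * complex_of_real (y/2) \<and>
      dd1 y + v2 y - complex_of_real y * d2 y = c * complex_of_real (y/2)"
  shows "c = 0"
proof -
  have dd1: "set_integrable lborel I1 dd1"
    using w2 by (rule set_integrable_weak_deriv)
  have "set_integrable lborel I1 (\<lambda>_. c)"
    using integrable_indicator_I1 unfolding set_integrable_def by (rule integrable_scaleR_left)
  moreover have "bounded_weight (\<lambda>y. y / 2)"
    unfolding bounded_weight_def by (auto simp: I1_def intro!: exI[of _ 1])
  ultimately have g: "set_integrable lborel I1 (\<lambda>y. c * complex_of_real (y / 2))"
    by (rule set_integrable_mult_bounded_weight)
  have eq1: "AE y in lborel. y \<in> I1 \<longrightarrow>
      v2 y - complex_of_real y * d1 y = c * complex_of_real (y/2)"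
    and eq2: "AE y in lborel. y \<in> I1 \<longrightarrow>
      dd1 y + v2 y - complex_of_real y * d2 y = c * complex_of_real (y/2)"
    using eq by (elim eventually_mono; blast)+
  have weak: "pairing dd1 (\<lambda>x. (1 - x\<^sup>2) * \<phi> x)
      = c * complex_of_real ((LINT x:I1|lborel. x * \<phi> x) / 2)" if "test_fun \<phi>" for \<phi>
    unfolding pairing_weak_form[OF w1 w2 w3 L2_I_imp_set_integrable[OF v2] g eq1 eq2 that]
    by (rule pairing_linear_rhs[OF that])
  define \<delta> where "\<delta> n = inverse (real (Suc n)) / 4" for n
  define T where "T = (\<lambda>n. LINT x:I1|lborel. cmod (dd1 x) * indicator {1 - 2 * \<delta> n..<1} x)"
  have "0 < \<delta> n" "\<delta> n \<le> 1/4" for n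
    by (auto simp: \<delta>_def field_simps)
  then have bound: "cmod c * exp (-8) / 32 \<le> T n" for n
    unfolding T_def by (intro endpoint_mass_lower_bound[OF dd1 weak])
  have "integrable lborel (\<lambda>x. indicator I1 x * cmod (dd1 x))"
    using set_integrable_norm[OF dd1] by (simp add: set_integrable_def)
  moreover have "(\<lambda>n. 2 * \<delta> n) \<longlonglongrightarrow> 0"
    using tendsto_divide[OF LIMSEQ_inverse_real_of_nat tendsto_const, of 2] by (simp add: \<delta>_def)
  ultimately have "T \<longlonglongrightarrow> 0"
    using tendsto_integral_indicator_left_0[of "\<lambda>x. indicator I1 x * cmod (dd1 x)" "\<lambda>n. 2 * \<delta> n" 1]
    by (simp add: T_def set_lebesgue_integral_def mult.assoc)
  then have "cmod c * exp (-8) / 32 \<le> 0"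
    using bound by (intro tendsto_lowerbound[of T]) auto
  then show "c = 0"
    by (simp add: mult_le_0_iff)
qed

theorem lemmaA1:
  shows "(\<not> (\<exists>v1 v2 d1 dd1 d2.
             sobolev_H 5 v1 \<and> sobolev_H 4 v2 \<and>
             weak_deriv v1 1 d1 \<and> weak_deriv v1 2 dd1 \<and> weak_deriv v2 1 d2 \<and>
             (AE y in lborel. y \<in> I1 \<longrightarrow>
                 v2 y - complex_of_real y * d1 y = complex_of_real (y/2) \<and>
                 dd1 y + v2 y - complex_of_real y * d2 y = complex_of_real (y/2))))
       \<and> (\<forall>v1 v2 d1 dd1 d2 (c::complex).
             sobolev_H 5 v1 \<and> sobolev_H 4 v2 \<and>
             weak_deriv v1 1 d1 \<and> weak_deriv v1 2 dd1 \<and> weak_deriv v2 1 d2 \<and>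
             (AE y in lborel. y \<in> I1 \<longrightarrow>
                 v2 y - complex_of_real y * d1 y = c * complex_of_real (y/2) \<and>
                 dd1 y + v2 y - complex_of_real y * d2 y = c * complex_of_real (y/2))
             \<longrightarrow> c = 0 \<and>
                 (AE y in lborel. y \<in> I1 \<longrightarrow>
                    v2 y - complex_of_real y * d1 y = 0 \<and>
                    dd1 y + v2 y - complex_of_real y * d2 y = 0))"
proof (rule conjI, goal_cases)
  case 1
  show ?case
    using L1_eq_multiple_of_g01_imp_zero[where c=1] by (auto simp: sobolev_H_def)
next
  case 2
  show ?case
  proof (intro allI impI, goal_cases)
    case (1 v1 v2 d1 dd1 d2 c)
    then have "c = 0"
      unfolding sobolev_H_def by (blast intro: L1_eq_multiple_of_g01_imp_zero)
    with 1 show ?case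
      by simp
  qed
qed

end
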